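(* For a Galton--Watson fractal model, let $\mu_n(\theta)=\mathbb{E}|\operatorname{proj}_\theta(S_n)|$ and $\mu_n=\mathbb{E}[\operatorname{Fav}(S_n)]=\int_0^\pi\mu_n(\theta)\,d\theta$. For each $\theta$, the sequence $(\mu_n(\theta))_n$ is convex, i.e. $\mu_n(\theta)-\mu_{n+1}(\theta)\le\mu_{n-1}(\theta)-\mu_n(\theta)$ for all $n\ge1$. Consequently the sequence $(\mu_n)_n$ is convex.
   Context: Galton--Watson (GW) fractal model: let $J_0\subset\mathbb{R}^2$ be a compact set equal to the closure of its interior, with finitely many connected components. Let $\mathfrak X=(\mathbf L;h_1(J_0),\dots,h_{\mathbf L}(J_0))$ be a random variable where $\mathbf L\in\{0,1,2,\dots\}$ is bounded, each $h_i$ is a homothety with contraction ratio $\rho\in(0,1)$ and $h_i(J_0)\subset J_0$, and $\mathbb{E}[\mathbf L]=\rho^{-1}$. Set $\mathcal{S}_0=\{J_0\}$, $S_0=J_0$; given $\mathcal{S}_n$, for each $R\in\mathcal{S}_n$ take an independent realization of $\mathfrak X$ (independent of $\mathcal{S}_n$) and let $\mathcal{S}_{n+1}$ consist of the images $g_R(h^R_i(J_0))$ where $g_R$ is the homothety with $g_R(J_0)=R$; $S_{n+1}=\bigcup\mathcal{S}_{n+1}$. $\operatorname{proj}_\theta(x)=\langle x,(-\sin\theta,\cos\theta)\rangle$, $|\cdot|$ is one-dimensional Lebesgue measure, and $\operatorname{Fav}(A)=\int_0^\pi|\operatorname{proj}_\theta A|\,d\theta$. *)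

theory Defs
  imports "HOL-Probability.Probability"
begin

type_synonym pt = "real \<times> real"

definition proj :: "real \<Rightarrow> pt \<Rightarrow> real" where
  "proj \<theta> x = x \<bullet> (- sin \<theta>, cos \<theta>)"

definition len :: "real set \<Rightarrow> real" where
  "len A = measure lebesgue A"

definition Fav :: "pt set \<Rightarrow> real" where
  "Fav A = integral {0..pi} (\<lambda>\<theta>. len (proj \<theta> ` A))"

definition hom :: "real \<Rightarrow> pt \<Rightarrow> pt \<Rightarrow> pt" where
  "hom \<rho> t x = \<rho> *\<^sub>R x + t"

text \<open>The offspring variable of the node with Ulam--Harris address p is
  X p \<omega> = (L, t): L children, child i (i < L) being the image of J0 under
  the homothety hom rho (t i), expressed in the coordinates of the parent.\<close>

definition offspringM :: "(nat \<times> (nat \<Rightarrow> pt)) measure" where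
  "offspringM = count_space UNIV \<Otimes>\<^sub>M (\<Pi>\<^sub>M i\<in>UNIV. borel)"

fun alive :: "(nat list \<Rightarrow> 'w \<Rightarrow> nat \<times> (nat \<Rightarrow> pt)) \<Rightarrow> 'w \<Rightarrow> nat list \<Rightarrow> nat list \<Rightarrow> bool" where
  "alive X \<omega> p [] = True"
| "alive X \<omega> p (i # w) = (i < fst (X p \<omega>) \<and> alive X \<omega> (p @ [i]) w)"

fun gmap :: "real \<Rightarrow> (nat list \<Rightarrow> 'w \<Rightarrow> nat \<times> (nat \<Rightarrow> pt)) \<Rightarrow> 'w \<Rightarrow> nat list \<Rightarrow> nat list \<Rightarrow> pt \<Rightarrow> pt" where
  "gmap \<rho> X \<omega> p [] = id"
| "gmap \<rho> X \<omega> p (i # w) = hom \<rho> (snd (X p \<omega>) i) \<circ> gmap \<rho> X \<omega> (p @ [i]) w"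

definition GW_S :: "real \<Rightarrow> pt set \<Rightarrow> (nat list \<Rightarrow> 'w \<Rightarrow> nat \<times> (nat \<Rightarrow> pt)) \<Rightarrow> nat \<Rightarrow> 'w \<Rightarrow> pt set" where
  "GW_S \<rho> J0 X n \<omega> = (\<Union>w\<in>{w. length w = n \<and> alive X \<omega> [] w}. gmap \<rho> X \<omega> [] w ` J0)"

end

theory Submission
  imports Defs
begin

text \<open>Write \<open>S\<^sub>n\<^sub>+\<^sub>1\<close> as the union over the children \<open>i < L\<close> of the root of \<open>h\<^sub>i(S\<^sup>i\<^sub>n)\<close>,
  where \<open>S\<^sup>i\<close> is the level set of the \<open>i\<close>-th subtree. The set \<open>proj S\<^sub>n\<^sub>+\<^sub>1 - proj S\<^sub>n\<^sub>+\<^sub>2\<close>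
  is covered by the sets \<open>proj h\<^sub>i(S\<^sup>i\<^sub>n) - proj h\<^sub>i(S\<^sup>i\<^sub>n\<^sub>+\<^sub>1)\<close>, and \<open>h\<^sub>i\<close> scales projected
  lengths by \<open>\<rho>\<close>; so the decrement \<open>|proj S\<^sub>n\<^sub>+\<^sub>1| - |proj S\<^sub>n\<^sub>+\<^sub>2|\<close> is at most \<open>\<rho>\<close> times the
  sum over \<open>i < L\<close> of the decrements \<open>|proj S\<^sup>i\<^sub>n| - |proj S\<^sup>i\<^sub>n\<^sub>+\<^sub>1|\<close>. Each subtree is
  distributed like the whole tree and is independent of the event \<open>i < L\<close>, so taking
  expectations gives \<open>\<mu>\<^sub>n\<^sub>+\<^sub>1(\<theta>) - \<mu>\<^sub>n\<^sub>+\<^sub>2(\<theta>) \<le> \<rho> E[L] (\<mu>\<^sub>n(\<theta>) - \<mu>\<^sub>n\<^sub>+\<^sub>1(\<theta>))\<close> with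
  \<open>\<rho> E[L] = 1\<close>. Integrating over \<open>\<theta>\<close> (Fubini) transfers convexity to \<open>\<mu>\<^sub>n\<close>.\<close>

type_synonym gw_tree = "nat list \<Rightarrow> nat \<times> (nat \<Rightarrow> pt)"

definition GW_level :: "real \<Rightarrow> pt set \<Rightarrow> gw_tree \<Rightarrow> nat \<Rightarrow> pt set" where
  "GW_level \<rho> J0 c n = GW_S \<rho> J0 (\<lambda>p (_::unit). c p) n ()"

definition subtree :: "nat \<Rightarrow> gw_tree \<Rightarrow> gw_tree" where
  "subtree i c = (\<lambda>q. c (i # q))"

definition GW_nested :: "real \<Rightarrow> pt set \<Rightarrow> gw_tree \<Rightarrow> bool" where
  "GW_nested \<rho> J0 c \<longleftrightarrow> (\<forall>p i. i < fst (c p) \<longrightarrow> hom \<rho> (snd (c p) i) ` J0 \<subseteq> J0)"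

lemma alive_append: "alive X \<omega> (a @ r) w = alive (\<lambda>q. X (a @ q)) \<omega> r w"
  by (induction w arbitrary: r) auto

lemma gmap_append: "gmap \<rho> X \<omega> (a @ r) w = gmap \<rho> (\<lambda>q. X (a @ q)) \<omega> r w"
  by (induction w arbitrary: r) auto

lemma alive_fix_outcome: "alive X \<omega> p w = alive (\<lambda>q _. X q \<omega>) u p w"
  by (induction w arbitrary: p) auto

lemma gmap_fix_outcome: "gmap \<rho> X \<omega> p w = gmap \<rho> (\<lambda>q _. X q \<omega>) u p w"
  by (induction w arbitrary: p) auto

lemma GW_S_eq_GW_level: "GW_S \<rho> J0 X n \<omega> = GW_level \<rho> J0 (\<lambda>p. X p \<omega>) n"
  unfolding GW_level_def GW_S_def
  by (simp only: alive_fix_outcome[of X \<omega> _ _ "()"] gmap_fix_outcome[of \<rho> X \<omega> _ _ "()"])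

lemma GW_level_0 [simp]: "GW_level \<rho> J0 c 0 = J0"
  unfolding GW_level_def GW_S_def by auto

lemma GW_level_Suc:
  "GW_level \<rho> J0 c (Suc n) =
     (\<Union>i<fst (c []). hom \<rho> (snd (c []) i) ` GW_level \<rho> J0 (subtree i c) n)"
proof -
  let ?C = "\<lambda>q (_::unit). c q"
  have words: "{w. length w = Suc n \<and> alive ?C () [] w}
      = (\<Union>i<fst (c []). Cons i ` {v. length v = n \<and> alive ?C () [i] v})"
    by (auto simp: length_Suc_conv)
  have "alive ?C () [i] v = alive (\<lambda>q _. subtree i c q) () [] v"
   and "gmap \<rho> ?C () [i] v = gmap \<rho> (\<lambda>q _. subtree i c q) () [] v" for i v
    using alive_append[of ?C "()" "[i]" "[]" v] gmap_append[of \<rho> ?C "()" "[i]" "[]" v]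
    by (simp_all add: subtree_def)
  then show ?thesis
    unfolding GW_level_def GW_S_def words by (auto simp: image_UN image_comp)
qed

lemma compact_hom_image: "compact A \<Longrightarrow> compact (hom \<rho> t ` A)"
  unfolding hom_def by (intro compact_continuous_image continuous_intros)

lemma compact_GW_level: "compact J0 \<Longrightarrow> compact (GW_level \<rho> J0 c n)"
  by (induction n arbitrary: c) (auto simp: GW_level_Suc intro!: compact_UN compact_hom_image)

lemma GW_nested_subtree: "GW_nested \<rho> J0 c \<Longrightarrow> GW_nested \<rho> J0 (subtree i c)"
  unfolding GW_nested_def subtree_def by blast

lemma GW_level_Suc_subset:
  "GW_nested \<rho> J0 c \<Longrightarrow> GW_level \<rho> J0 c (Suc n) \<subseteq> GW_level \<rho> J0 c n"
proof (induction n arbitrary: c)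
  case 0
  then show ?case by (auto simp: GW_level_Suc GW_nested_def)
next
  case (Suc n)
  then have "GW_level \<rho> J0 (subtree i c) (Suc n) \<subseteq> GW_level \<rho> J0 (subtree i c) n" for i
    using GW_nested_subtree by blast
  then show ?case
    by (subst (1 2) GW_level_Suc) (intro UN_mono order.refl image_mono)
qed

lemma GW_level_subset:
  assumes "GW_nested \<rho> J0 c"
  shows "GW_level \<rho> J0 c n \<subseteq> J0"
proof (induction n)
  case (Suc n)
  then show ?case using GW_level_Suc_subset[OF assms] by blast
qed simp

lemma proj_scaleR_add: "proj \<theta> (a *\<^sub>R y + t) = a * proj \<theta> y + proj \<theta> t"
  unfolding proj_def by (simp add: inner_add_left)

lemma len_proj_hom_image: "len (proj \<theta> ` hom \<rho> t ` A) = \<bar>\<rho>\<bar> * len (proj \<theta> ` A)"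
proof -
  have "proj \<theta> ` hom \<rho> t ` A = (\<lambda>x. \<rho> * x + proj \<theta> t) ` proj \<theta> ` A"
    unfolding hom_def image_image proj_scaleR_add ..
  then show ?thesis
    unfolding len_def using measure_lebesgue_affine[of \<rho> "proj \<theta> t"] by simp
qed

lemma compact_proj_image: "compact A \<Longrightarrow> compact (proj \<theta> ` A)"
  unfolding proj_def by (intro compact_continuous_image continuous_intros)

lemma measure_UN_diff_le:
  assumes "finite I"
    and "\<And>i. i \<in> I \<Longrightarrow> A i \<in> fmeasurable M" and "\<And>i. i \<in> I \<Longrightarrow> B i \<in> fmeasurable M"
    and "\<And>i. i \<in> I \<Longrightarrow> B i \<subseteq> A i"
  shows "measure M (\<Union>i\<in>I. A i) - measure M (\<Union>i\<in>I. B i)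
           \<le> (\<Sum>i\<in>I. measure M (A i) - measure M (B i))"
proof -
  have UA: "(\<Union>i\<in>I. A i) \<in> fmeasurable M" and UB: "(\<Union>i\<in>I. B i) \<in> fmeasurable M"
    using assms by (auto intro: fmeasurable.finite_UN)
  have "measure M (\<Union>i\<in>I. A i) - measure M (\<Union>i\<in>I. B i)
      = measure M ((\<Union>i\<in>I. A i) - (\<Union>i\<in>I. B i))"
    using UA UB assms(4) by (intro measurable_measure_Diff[symmetric]) auto
  also have "\<dots> \<le> measure M (\<Union>i\<in>I. A i - B i)"
    using assms UA by (intro measure_mono_fmeasurable) (auto intro!: fmeasurable.finite_UN sets.Diff)
  also have "\<dots> \<le> (\<Sum>i\<in>I. measure M (A i - B i))"
    using assms by (intro measure_UNION_le) auto
  also have "\<dots> = (\<Sum>i\<in>I. measure M (A i) - measure M (B i))"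
    using assms by (intro sum.cong refl measurable_measure_Diff) auto
  finally show ?thesis .
qed

lemma len_proj_GW_level_decrement_le:
  assumes "compact J0" and "GW_nested \<rho> J0 c" and "0 < \<rho>"
  shows "len (proj \<theta> ` GW_level \<rho> J0 c (Suc m)) - len (proj \<theta> ` GW_level \<rho> J0 c (Suc (Suc m)))
     \<le> \<rho> * (\<Sum>i<fst (c []). len (proj \<theta> ` GW_level \<rho> J0 (subtree i c) m)
                              - len (proj \<theta> ` GW_level \<rho> J0 (subtree i c) (Suc m)))"
proof -
  define A where "A k i = proj \<theta> ` hom \<rho> (snd (c []) i) ` GW_level \<rho> J0 (subtree i c) k" for k i
  have "A k i \<in> fmeasurable lebesgue" for k i
    unfolding A_def using assms(1)
    by (intro lmeasurable_compact compact_proj_image compact_hom_image compact_GW_level)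
  moreover have "A (Suc m) i \<subseteq> A m i" for i
    unfolding A_def using GW_level_Suc_subset[OF GW_nested_subtree[OF assms(2)]] by blast
  moreover have "proj \<theta> ` GW_level \<rho> J0 c (Suc k) = (\<Union>i<fst (c []). A k i)" for k
    unfolding A_def GW_level_Suc by blast
  ultimately have "len (proj \<theta> ` GW_level \<rho> J0 c (Suc m))
      - len (proj \<theta> ` GW_level \<rho> J0 c (Suc (Suc m)))
      \<le> (\<Sum>i<fst (c []). len (A m i) - len (A (Suc m) i))"
    unfolding len_def by (simp add: measure_UN_diff_le)
  also have "\<dots> = \<rho> * (\<Sum>i<fst (c []). len (proj \<theta> ` GW_level \<rho> J0 (subtree i c) m)
                              - len (proj \<theta> ` GW_level \<rho> J0 (subtree i c) (Suc m)))"
    unfolding A_def len_proj_hom_image using assms(3)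
    by (simp add: sum_distrib_left algebra_simps)
  finally show ?thesis .
qed

lemma len_proj_le_of_norm_le:
  assumes "compact A" and "0 \<le> R" and "\<And>x. x \<in> A \<Longrightarrow> norm x \<le> R"
  shows "len (proj \<theta> ` A) \<le> 2 * R"
proof -
  have "proj \<theta> ` A \<subseteq> {-R..R}"
  proof
    fix z assume "z \<in> proj \<theta> ` A"
    then obtain x where x: "x \<in> A" "z = proj \<theta> x" by blast
    have "\<bar>z\<bar> \<le> norm x * norm (- sin \<theta>, cos \<theta>)"
      unfolding x proj_def by (rule Cauchy_Schwarz_ineq2)
    also have "\<dots> \<le> R" using assms(3)[OF x(1)] by (simp add: norm_Pair)
    finally show "z \<in> {-R..R}" by auto
  qed
  then have "len (proj \<theta> ` A) \<le> measure lebesgue {-R..R}"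
    unfolding len_def using assms(1)
    by (intro measure_mono_fmeasurable fmeasurableD lmeasurable_compact compact_proj_image) auto
  also have "\<dots> = 2 * R"
    using assms(2) by (simp add: measure_completion)
  finally show ?thesis .
qed

lemma len_proj_GW_level_bounded:
  assumes "compact J0"
  obtains R
  where "\<And>\<theta> n c. GW_nested \<rho> J0 c \<Longrightarrow> len (proj \<theta> ` GW_level \<rho> J0 c n) \<le> R"
proof -
  obtain R where "0 \<le> R" and R: "\<And>x. x \<in> J0 \<Longrightarrow> norm x \<le> R"
    using compact_imp_bounded[OF assms] unfolding bounded_iff
    by (meson norm_ge_zero order.trans linear)
  have "len (proj \<theta> ` GW_level \<rho> J0 c n) \<le> 2 * R" if "GW_nested \<rho> J0 c" for \<theta> n c
    using assms \<open>0 \<le> R\<close> R GW_level_subset[OF that]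
    by (intro len_proj_le_of_norm_le compact_GW_level) auto
  then show thesis using that by blast
qed

lemma sum_lessThan_eq_of_bool_mult:
  fixes f :: "nat \<Rightarrow> 'a::semiring_1"
  assumes "L \<le> B"
  shows "(\<Sum>i<L. f i) = (\<Sum>i<B. of_bool (i < L) * f i)"
proof -
  have "(\<Sum>i<B. of_bool (i < L) * f i) = (\<Sum>i<L. of_bool (i < L) * f i)"
    by (rule sum.mono_neutral_right) (use assms in auto)
  then show ?thesis by simp
qed

lemma set_integral_diff_le:
  fixes f1 f2 g1 g2 :: "'a \<Rightarrow> real"
  assumes "set_integrable M S f1" "set_integrable M S f2"
    and "set_integrable M S g1" "set_integrable M S g2"
    and "\<And>x. x \<in> S \<Longrightarrow> f1 x - f2 x \<le> g1 x - g2 x"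
  shows "(LINT x:S|M. f1 x) - (LINT x:S|M. f2 x) \<le> (LINT x:S|M. g1 x) - (LINT x:S|M. g2 x)"
proof -
  have "(LINT x:S|M. f1 x) - (LINT x:S|M. f2 x) = (LINT x:S|M. f1 x - f2 x)"
    using assms by (simp add: set_integral_diff(2))
  also have "\<dots> \<le> (LINT x:S|M. g1 x - g2 x)"
    using assms by (intro set_integral_mono set_integral_diff(1)) auto
  also have "\<dots> = (LINT x:S|M. g1 x) - (LINT x:S|M. g2 x)"
    using assms by (simp add: set_integral_diff(2))
  finally show ?thesis .
qed

abbreviation treeM :: "gw_tree measure" where
  "treeM \<equiv> \<Pi>\<^sub>M p\<in>UNIV. offspringM"

lemma space_offspringM [simp]: "space offspringM = UNIV"
  unfolding offspringM_def by (simp add: space_pair_measure space_PiM PiE_UNIV_domain)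

lemma space_treeM [simp]: "space treeM = UNIV"
  by (simp add: space_PiM PiE_UNIV_domain)

lemma measurable_tree_offspring_count [measurable]:
  "(\<lambda>c::gw_tree. fst (c p)) \<in> measurable treeM (count_space UNIV)"
  unfolding offspringM_def by measurable

lemma measurable_tree_offspring_position [measurable]:
  "(\<lambda>c::gw_tree. snd (c p) i) \<in> borel_measurable treeM"
  unfolding offspringM_def by measurable

lemma measurable_alive [measurable]:
  "(\<lambda>c. alive (\<lambda>q _. c q) u p w) \<in> measurable treeM (count_space UNIV)"
  by (induction w arbitrary: p) auto

lemma measurable_subtree [measurable]: "subtree i \<in> measurable treeM treeM"
proof -
  have "(\<lambda>c. \<lambda>q\<in>UNIV. c (i # q)) \<in> measurable treeM treeM"
    by (intro measurable_restrict measurable_component_singleton) simp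
  then show ?thesis unfolding subtree_def restrict_UNIV .
qed

fun gmap_transl :: "real \<Rightarrow> gw_tree \<Rightarrow> nat list \<Rightarrow> nat list \<Rightarrow> pt" where
  "gmap_transl \<rho> c p [] = 0"
| "gmap_transl \<rho> c p (i # w) = \<rho> *\<^sub>R gmap_transl \<rho> c (p @ [i]) w + snd (c p) i"

lemma gmap_eq_scaleR_add_transl:
  "gmap \<rho> (\<lambda>q _. c q) u p w y = \<rho> ^ length w *\<^sub>R y + gmap_transl \<rho> c p w"
  by (induction w arbitrary: p) (auto simp: hom_def algebra_simps)

lemma measurable_gmap_transl [measurable]:
  "(\<lambda>c. gmap_transl \<rho> c p w) \<in> borel_measurable treeM"
  by (induction w arbitrary: p) auto

text \<open>Joint measurability of \<open>(\<theta>, c) \<mapsto> |proj\<^sub>\<theta> S\<^sub>k(c)|\<close> comes from Tonelli: it is the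
  measure of the sections of \<open>proj_level_graph\<close>, and that set is measurable because every point
  of \<open>S\<^sub>k(c)\<close> has the form \<open>\<rho>\<^sup>k y + t\<close> with \<open>y \<in> J0\<close> and a translation \<open>t\<close> measurable in \<open>c\<close>.\<close>

definition proj_graph :: "pt set \<Rightarrow> (real \<times> real) set" where
  "proj_graph A = {(\<theta>, z). \<exists>y\<in>A. z = proj \<theta> y}"

lemma closed_proj_graph:
  assumes "compact A"
  shows "closed (proj_graph A)"
proof -
  have "{(y, (\<theta>::real, z)). z = proj \<theta> y} = {u. snd (snd u) = proj (fst (snd u)) (fst u)}"
    by auto
  then have "closed {(y, (\<theta>::real, z)). z = proj \<theta> y}"
    unfolding proj_def by (simp add: closed_Collect_eq continuous_intros)
  then have "closed {v. \<exists>y. y \<in> A \<and> (y, v) \<in> {(y, (\<theta>::real, z)). z = proj \<theta> y}}"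
    by (rule closed_compact_projection[OF assms])
  also have "{v. \<exists>y. y \<in> A \<and> (y, v) \<in> {(y, (\<theta>::real, z)). z = proj \<theta> y}} = proj_graph A"
    unfolding proj_graph_def by auto
  finally show ?thesis .
qed

definition proj_level_graph ::
  "real \<Rightarrow> pt set \<Rightarrow> nat \<Rightarrow> ((real \<times> gw_tree) \<times> real) set" where
  "proj_level_graph \<rho> J0 k = {((\<theta>, c), x). x \<in> proj \<theta> ` GW_level \<rho> J0 c k}"

lemma proj_level_graph_sets:
  assumes "compact J0" and "\<rho> \<noteq> 0"
  shows "proj_level_graph \<rho> J0 k \<in> sets ((borel \<Otimes>\<^sub>M treeM) \<Otimes>\<^sub>M lborel)"
proof -
  have [measurable]: "proj_graph J0 \<in> sets borel"
    using closed_proj_graph[OF assms(1)] by (rule borel_closed)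
  have section_iff: "x \<in> proj \<theta> ` gmap \<rho> (\<lambda>q _. c q) () [] w ` J0 \<longleftrightarrow>
        (\<theta>, (x - proj \<theta> (gmap_transl \<rho> c [] w)) / \<rho> ^ k) \<in> proj_graph J0"
    if "length w = k" for \<theta> c x w
    using assms(2) that
    unfolding image_image image_iff gmap_eq_scaleR_add_transl proj_scaleR_add proj_graph_def
    by (auto simp: field_simps)
  have "((\<theta>, c), x) \<in> proj_level_graph \<rho> J0 k \<longleftrightarrow>
      (\<exists>w. length w = k \<and> alive (\<lambda>q _. c q) () [] w \<and>
        (\<theta>, (x - proj \<theta> (gmap_transl \<rho> c [] w)) / \<rho> ^ k) \<in> proj_graph J0)" for \<theta> c x
    unfolding proj_level_graph_def GW_level_def GW_S_def image_UN by (simp add: section_iff cong: conj_cong)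
  then have "proj_level_graph \<rho> J0 k = {u \<in> space ((borel \<Otimes>\<^sub>M treeM) \<Otimes>\<^sub>M lborel).
      \<exists>w. length w = k \<and> alive (\<lambda>q _. snd (fst u) q) () [] w \<and>
        (fst (fst u), (snd u - proj (fst (fst u)) (gmap_transl \<rho> (snd (fst u)) [] w)) / \<rho> ^ k)
          \<in> proj_graph J0}"
    by (auto simp: space_pair_measure)
  also have "\<dots> \<in> sets ((borel \<Otimes>\<^sub>M treeM) \<Otimes>\<^sub>M lborel)"
    unfolding proj_def by measurable
  finally show ?thesis .
qed

lemma measurable_len_proj_GW_level:
  assumes "compact J0" and "\<rho> \<noteq> 0"
  shows "(\<lambda>u. len (proj (fst u) ` GW_level \<rho> J0 (snd u) k))
           \<in> borel_measurable (borel \<Otimes>\<^sub>M treeM)"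
proof -
  have "len (proj \<theta> ` GW_level \<rho> J0 c k)
      = enn2real (emeasure lborel (Pair (\<theta>, c) -` proj_level_graph \<rho> J0 k))" for \<theta> c
  proof -
    have "proj \<theta> ` GW_level \<rho> J0 c k \<in> sets lborel"
      using assms(1) by (simp add: borel_compact compact_proj_image compact_GW_level)
    then show ?thesis
      by (simp add: len_def proj_level_graph_def measure_def)
  qed
  moreover have "(\<lambda>u. emeasure lborel (Pair u -` proj_level_graph \<rho> J0 k))
      \<in> borel_measurable (borel \<Otimes>\<^sub>M treeM)"
    using lborel.measurable_emeasure_Pair[OF proj_level_graph_sets[OF assms]] .
  ultimately show ?thesis
    by (metis (mono_tags, lifting) borel_measurable_enn2real measurable_cong prod.collapse)
qed

locale GW_model = prob_space M for M :: "'w measure" +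
  fixes \<rho> :: real and J0 :: "pt set" and B :: nat
    and X :: "nat list \<Rightarrow> 'w \<Rightarrow> nat \<times> (nat \<Rightarrow> pt)"
  assumes compact_J0: "compact J0"
    and rho_pos: "0 < \<rho>"
    and measurable_X [measurable]: "\<And>p. X p \<in> measurable M offspringM"
    and indep_X: "indep_vars (\<lambda>_. offspringM) X UNIV"
    and distr_X: "\<And>p. distr M offspringM (X p) = distr M offspringM (X [])"
    and offspring_le: "\<And>p \<omega>. \<omega> \<in> space M \<Longrightarrow> fst (X p \<omega>) \<le> B"
    and children_in_J0:
      "\<And>p \<omega> i. \<omega> \<in> space M \<Longrightarrow> i < fst (X p \<omega>) \<Longrightarrow> hom \<rho> (snd (X p \<omega>) i) ` J0 \<subseteq> J0"
    and expected_offspring: "expectation (\<lambda>\<omega>. real (fst (X [] \<omega>))) = 1 / \<rho>"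
begin

definition tree :: "'w \<Rightarrow> gw_tree" where
  "tree \<omega> = (\<lambda>p. X p \<omega>)"

abbreviation width :: "real \<Rightarrow> nat \<Rightarrow> gw_tree \<Rightarrow> real" where
  "width \<theta> n c \<equiv> len (proj \<theta> ` GW_level \<rho> J0 c n)"

lemma GW_S_eq_GW_level_tree: "GW_S \<rho> J0 X n \<omega> = GW_level \<rho> J0 (tree \<omega>) n"
  unfolding tree_def by (rule GW_S_eq_GW_level)

lemma measurable_tree [measurable]: "tree \<in> measurable M treeM"
  using measurable_restrict[of UNIV X M "\<lambda>_. offspringM"] unfolding tree_def restrict_UNIV by simp

lemma measurable_offspring_count [measurable]:
  "(\<lambda>\<omega>. fst (X p \<omega>)) \<in> measurable M (count_space UNIV)"
  using measurable_X[of p] unfolding offspringM_def by measurable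

lemma GW_nested_tree: "\<omega> \<in> space M \<Longrightarrow> GW_nested \<rho> J0 (tree \<omega>)"
  using children_in_J0 unfolding GW_nested_def tree_def by blast

lemma measurable_width_comp:
  assumes [measurable]: "f \<in> borel_measurable N" "g \<in> measurable N treeM"
  shows "(\<lambda>x. width (f x) n (g x)) \<in> borel_measurable N"
proof -
  have "(\<lambda>x. (f x, g x)) \<in> measurable N (borel \<Otimes>\<^sub>M treeM)"
    by measurable
  from measurable_compose[OF this measurable_len_proj_GW_level[OF compact_J0]] show ?thesis
    using rho_pos by simp
qed

lemma measurable_width [measurable]: "width \<theta> n \<in> borel_measurable treeM"
  by (rule measurable_width_comp) auto

lemma integrable_width:
  assumes [measurable]: "T \<in> measurable M treeM" and "\<And>\<omega>. \<omega> \<in> space M \<Longrightarrow> GW_nested \<rho> J0 (T \<omega>)"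
  shows "integrable M (\<lambda>\<omega>. width \<theta> n (T \<omega>))"
proof -
  obtain R where "\<And>\<theta> n c. GW_nested \<rho> J0 c \<Longrightarrow> width \<theta> n c \<le> R"
    using len_proj_GW_level_bounded[OF compact_J0] by blast
  then show ?thesis
    using assms(2) measurable_compose[OF assms(1) measurable_width]
    by (intro integrable_const_bound[where B=R] AE_I2) (auto simp: len_def)
qed

lemma distr_tree: "distr M treeM tree = (\<Pi>\<^sub>M p\<in>UNIV. distr M offspringM (X []))"
proof -
  have "distr M treeM (\<lambda>\<omega>. \<lambda>p\<in>UNIV. X p \<omega>) = (\<Pi>\<^sub>M p\<in>UNIV. distr M offspringM (X p))"
    using iffD1[OF indep_vars_iff_distr_eq_PiM[OF UNIV_not_empty measurable_X] indep_X] .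
  moreover have "(\<lambda>p. distr M offspringM (X p)) = (\<lambda>_. distr M offspringM (X []))"
    by (rule ext) (rule distr_X)
  ultimately show ?thesis
    unfolding tree_def[abs_def] restrict_UNIV by simp
qed

lemma distr_subtree_tree: "distr M treeM (\<lambda>\<omega>. subtree i (tree \<omega>)) = distr M treeM tree"
proof -
  have "prob_space (distr M offspringM (X []))"
    by (intro prob_space_distr measurable_X)
  have "distr M treeM (\<lambda>\<omega>. subtree i (tree \<omega>)) = distr (distr M treeM tree) treeM (subtree i)"
    by (subst distr_distr) (auto simp: comp_def)
  also have "\<dots> = distr (\<Pi>\<^sub>M p\<in>UNIV. distr M offspringM (X []))
      (\<Pi>\<^sub>M p\<in>UNIV. distr M offspringM (X [])) (\<lambda>c. \<lambda>q\<in>UNIV. c (i # q))"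
    unfolding distr_tree by (intro distr_cong refl sets_PiM_cong) (auto simp: subtree_def)
  also have "\<dots> = distr M treeM tree"
    unfolding distr_tree using distr_PiM_reindex[of UNIV _ "(#) i" UNIV] \<open>prob_space _\<close> by simp
  finally show ?thesis .
qed

lemma expectation_subtree:
  fixes G :: "gw_tree \<Rightarrow> real"
  assumes [measurable]: "G \<in> borel_measurable treeM"
  shows "expectation (\<lambda>\<omega>. G (subtree i (tree \<omega>))) = expectation (\<lambda>\<omega>. G (tree \<omega>))"
  using integral_distr[of "\<lambda>\<omega>. subtree i (tree \<omega>)" M treeM G] integral_distr[of tree M treeM G]
  by (simp add: distr_subtree_tree)

lemma integrable_offspring_gt: "integrable M (\<lambda>\<omega>. of_bool (i < fst (X p \<omega>)) :: real)"
proof (rule integrable_const_bound[where B=1])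
  show "(\<lambda>\<omega>. of_bool (i < fst (X p \<omega>)) :: real) \<in> borel_measurable M"
    by measurable
qed simp

lemma expectation_offspring_subtree:
  fixes G :: "gw_tree \<Rightarrow> real"
  assumes [measurable]: "G \<in> borel_measurable treeM"
    and "integrable M (\<lambda>\<omega>. G (subtree i (tree \<omega>)))"
  shows "expectation (\<lambda>\<omega>. of_bool (i < fst (X [] \<omega>)) * G (subtree i (tree \<omega>)))
       = expectation (\<lambda>\<omega>. of_bool (i < fst (X [] \<omega>))) * expectation (\<lambda>\<omega>. G (subtree i (tree \<omega>)))"
proof -
  have root_subtree_indep:
    "indep_var (\<Pi>\<^sub>M p\<in>{[]}. offspringM) (\<lambda>\<omega>. restrict (\<lambda>p. X p \<omega>) {[]})
       (\<Pi>\<^sub>M p\<in>range ((#) i). offspringM) (\<lambda>\<omega>. restrict (\<lambda>p. X p \<omega>) (range ((#) i)))"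
    by (rule indep_var_restrict[OF indep_X]) auto
  have root_part:
    "(\<lambda>c::gw_tree. of_bool (i < fst (c [])) :: real) \<in> borel_measurable (\<Pi>\<^sub>M p\<in>{[]}. offspringM)"
    unfolding offspringM_def by measurable
  have subtree_part:
    "(\<lambda>c::gw_tree. G (\<lambda>q. c (i # q))) \<in> borel_measurable (\<Pi>\<^sub>M p\<in>range ((#) i). offspringM)"
  proof -
    have "(\<lambda>c::gw_tree. \<lambda>q\<in>UNIV. c (i # q))
        \<in> measurable (\<Pi>\<^sub>M p\<in>range ((#) i). offspringM) treeM"
      by (intro measurable_restrict measurable_component_singleton) auto
    from measurable_compose[OF this assms(1)] show ?thesis unfolding restrict_UNIV .
  qed
  have "indep_var borel (\<lambda>\<omega>. of_bool (i < fst (X [] \<omega>)) :: real)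
                     borel (\<lambda>\<omega>. G (subtree i (tree \<omega>)))"
    using indep_var_compose[OF root_subtree_indep root_part subtree_part]
    by (simp add: comp_def subtree_def tree_def)
  from indep_var_lebesgue_integral[OF this integrable_offspring_gt assms(2)] show ?thesis .
qed

lemma sum_expectation_offspring_gt:
  "(\<Sum>i<B. expectation (\<lambda>\<omega>. of_bool (i < fst (X [] \<omega>)))) = 1 / \<rho>"
proof -
  have "(\<Sum>i<B. expectation (\<lambda>\<omega>. of_bool (i < fst (X [] \<omega>)) :: real))
      = expectation (\<lambda>\<omega>. \<Sum>i<B. of_bool (i < fst (X [] \<omega>)))"
    by (rule Bochner_Integration.integral_sum[symmetric]) (rule integrable_offspring_gt)
  also have "\<dots> = expectation (\<lambda>\<omega>. real (fst (X [] \<omega>)))"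
  proof (rule Bochner_Integration.integral_cong[OF refl])
    fix \<omega> assume "\<omega> \<in> space M"
    from sum_lessThan_eq_of_bool_mult[OF offspring_le[OF this], of "\<lambda>_. 1::real"]
    show "(\<Sum>i<B. of_bool (i < fst (X [] \<omega>))) = real (fst (X [] \<omega>))"
      by simp
  qed
  finally show ?thesis
    using expected_offspring by simp
qed

lemma expected_width_decrement_le:
  "expectation (\<lambda>\<omega>. width \<theta> (Suc m) (tree \<omega>))
     - expectation (\<lambda>\<omega>. width \<theta> (Suc (Suc m)) (tree \<omega>))
   \<le> expectation (\<lambda>\<omega>. width \<theta> m (tree \<omega>)) - expectation (\<lambda>\<omega>. width \<theta> (Suc m) (tree \<omega>))"
proof -
  define D where "D c = width \<theta> m c - width \<theta> (Suc m) c" for c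
  define child where "child i \<omega> = (of_bool (i < fst (X [] \<omega>)) :: real)" for i \<omega>
  have measurable_D [measurable]: "D \<in> borel_measurable treeM"
    unfolding D_def[abs_def] by measurable
  have integrable_tree: "integrable M (\<lambda>\<omega>. width \<theta> n (tree \<omega>))" for n
    by (intro integrable_width measurable_tree GW_nested_tree)
  have integrable_subtree: "integrable M (\<lambda>\<omega>. D (subtree i (tree \<omega>)))" for i
    unfolding D_def
    by (intro Bochner_Integration.integrable_diff integrable_width GW_nested_subtree GW_nested_tree
        measurable_compose[OF measurable_tree measurable_subtree])
  have integrable_child: "integrable M (\<lambda>\<omega>. child i \<omega> * D (subtree i (tree \<omega>)))" for i
    using integrable_subtree
    by (rule Bochner_Integration.integrable_bound) (auto simp: child_def)
  have "width \<theta> (Suc m) (tree \<omega>) - width \<theta> (Suc (Suc m)) (tree \<omega>)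
      \<le> \<rho> * (\<Sum>i<B. child i \<omega> * D (subtree i (tree \<omega>)))" if "\<omega> \<in> space M" for \<omega>
  proof -
    have "width \<theta> (Suc m) (tree \<omega>) - width \<theta> (Suc (Suc m)) (tree \<omega>)
        \<le> \<rho> * (\<Sum>i<fst (X [] \<omega>). D (subtree i (tree \<omega>)))"
      using len_proj_GW_level_decrement_le[OF compact_J0 GW_nested_tree[OF that] rho_pos]
      by (simp add: D_def tree_def)
    also have "(\<Sum>i<fst (X [] \<omega>). D (subtree i (tree \<omega>)))
        = (\<Sum>i<B. child i \<omega> * D (subtree i (tree \<omega>)))"
      unfolding child_def by (rule sum_lessThan_eq_of_bool_mult[OF offspring_le[OF that]])
    finally show ?thesis .
  qed
  then have "expectation (\<lambda>\<omega>. width \<theta> (Suc m) (tree \<omega>) - width \<theta> (Suc (Suc m)) (tree \<omega>))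
      \<le> expectation (\<lambda>\<omega>. \<rho> * (\<Sum>i<B. child i \<omega> * D (subtree i (tree \<omega>))))"
    using integrable_tree integrable_child by (intro integral_mono) auto
  also have "\<dots> = \<rho> * (\<Sum>i<B. expectation (\<lambda>\<omega>. child i \<omega> * D (subtree i (tree \<omega>))))"
    using integrable_child by (simp add: Bochner_Integration.integral_sum)
  also have "\<dots> = \<rho> * (\<Sum>i<B. expectation (child i) * expectation (\<lambda>\<omega>. D (tree \<omega>)))"
    using expectation_offspring_subtree[OF measurable_D integrable_subtree]
      expectation_subtree[OF measurable_D]
    unfolding child_def by simp
  also have "\<dots> = expectation (\<lambda>\<omega>. D (tree \<omega>))"
    using sum_expectation_offspring_gt rho_pos
    unfolding child_def[abs_def] by (simp add: sum_distrib_right[symmetric])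
  finally show ?thesis
    using integrable_tree by (simp add: D_def Bochner_Integration.integral_diff)
qed

lemma set_integrable_width:
  assumes "GW_nested \<rho> J0 c"
  shows "set_integrable lborel {0..pi} (\<lambda>\<theta>. width \<theta> n c)"
proof -
  obtain R where R: "\<And>\<theta> n c. GW_nested \<rho> J0 c \<Longrightarrow> width \<theta> n c \<le> R"
    using len_proj_GW_level_bounded[OF compact_J0] by blast
  have "(\<lambda>\<theta>. width \<theta> n c) \<in> borel_measurable lborel"
    by (rule measurable_width_comp) auto
  then show ?thesis
    unfolding set_integrable_def using R[OF assms]
    by (intro integrableI_bounded_set_indicator[where B=R]) (auto simp: len_def)
qed

lemma Fav_GW_level_eq_set_integral:
  assumes "GW_nested \<rho> J0 c"
  shows "Fav (GW_level \<rho> J0 c n) = (LINT \<theta>:{0..pi}|lborel. width \<theta> n c)"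
  unfolding Fav_def using set_borel_integral_eq_integral(2)[OF set_integrable_width[OF assms]] by simp

lemma integrable_width_pair:
  "integrable (lborel \<Otimes>\<^sub>M M) (\<lambda>(\<theta>, \<omega>). indicator {0..pi} \<theta> * width \<theta> n (tree \<omega>))"
proof -
  obtain R where R: "\<And>\<theta> n c. GW_nested \<rho> J0 c \<Longrightarrow> width \<theta> n c \<le> R"
    using len_proj_GW_level_bounded[OF compact_J0] by blast
  have "integrable (lborel \<Otimes>\<^sub>M M)
      (\<lambda>u. indicator ({0..pi} \<times> space M) u *\<^sub>R width (fst u) n (tree (snd u)))"
  proof (rule integrableI_bounded_set_indicator[where B=R])
    show "emeasure (lborel \<Otimes>\<^sub>M M) ({0..pi} \<times> space M) < \<infinity>"
      by (subst emeasure_pair_measure_Times) (auto simp: emeasure_space_1 ennreal_mult_less_top)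
    show "AE u in lborel \<Otimes>\<^sub>M M.
        u \<in> {0..pi} \<times> space M \<longrightarrow> norm (width (fst u) n (tree (snd u))) \<le> R"
      using R GW_nested_tree by (intro AE_I2) (auto simp: len_def)
    show "(\<lambda>u. width (fst u) n (tree (snd u))) \<in> borel_measurable (lborel \<Otimes>\<^sub>M M)"
      by (rule measurable_width_comp) auto
  qed auto
  then show ?thesis
    by (rule Bochner_Integration.integrable_cong[OF refl, THEN iffD1, rotated])
       (auto simp: space_pair_measure indicator_def split_beta)
qed

lemma expectation_Fav_GW_level:
  shows "expectation (\<lambda>\<omega>. Fav (GW_level \<rho> J0 (tree \<omega>) n))
           = (LINT \<theta>:{0..pi}|lborel. expectation (\<lambda>\<omega>. width \<theta> n (tree \<omega>)))"
    and "set_integrable lborel {0..pi} (\<lambda>\<theta>. expectation (\<lambda>\<omega>. width \<theta> n (tree \<omega>)))"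
proof -
  interpret pair_sigma_finite lborel M
    by (intro pair_sigma_finite.intro lborel.sigma_finite_measure_axioms sigma_finite_measure_axioms)
  have inner: "(\<integral>\<omega>. indicator {0..pi} \<theta> * width \<theta> n (tree \<omega>) \<partial>M)
      = indicator {0..pi} \<theta> *\<^sub>R expectation (\<lambda>\<omega>. width \<theta> n (tree \<omega>))" for \<theta>
    by simp
  have "expectation (\<lambda>\<omega>. Fav (GW_level \<rho> J0 (tree \<omega>) n))
      = (\<integral>\<omega>. (\<integral>\<theta>. indicator {0..pi} \<theta> * width \<theta> n (tree \<omega>) \<partial>lborel) \<partial>M)"
    by (intro Bochner_Integration.integral_cong refl)
       (simp add: Fav_GW_level_eq_set_integral GW_nested_tree set_lebesgue_integral_def)
  also have "\<dots> = (\<integral>\<theta>. (\<integral>\<omega>. indicator {0..pi} \<theta> * width \<theta> n (tree \<omega>) \<partial>M) \<partial>lborel)"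
    using Fubini_integral[OF integrable_width_pair] by simp
  finally show "expectation (\<lambda>\<omega>. Fav (GW_level \<rho> J0 (tree \<omega>) n))
           = (LINT \<theta>:{0..pi}|lborel. expectation (\<lambda>\<omega>. width \<theta> n (tree \<omega>)))"
    unfolding inner set_lebesgue_integral_def .
  show "set_integrable lborel {0..pi} (\<lambda>\<theta>. expectation (\<lambda>\<omega>. width \<theta> n (tree \<omega>)))"
    using integrable_fst'[OF integrable_width_pair] unfolding set_integrable_def inner by simp
qed

end

theorem lemma3p3:
  fixes M :: "'w measure"
    and X :: "nat list \<Rightarrow> 'w \<Rightarrow> nat \<times> (nat \<Rightarrow> pt)"
    and J0 :: "pt set" and \<rho> :: real
  assumes "prob_space M"
    and "compact J0" and "closure (interior J0) = J0" and "finite (components J0)"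
    and "0 < \<rho>" and "\<rho> < 1"
    and "\<And>p. X p \<in> measurable M offspringM"
    and "prob_space.indep_vars M (\<lambda>_. offspringM) X UNIV"
    and "\<And>p. distr M offspringM (X p) = distr M offspringM (X [])"
    and "\<exists>B. \<forall>p. \<forall>\<omega>\<in>space M. fst (X p \<omega>) \<le> B"
    and "\<And>p \<omega> i. \<omega> \<in> space M \<Longrightarrow> i < fst (X p \<omega>) \<Longrightarrow> hom \<rho> (snd (X p \<omega>) i) ` J0 \<subseteq> J0"
    and "prob_space.expectation M (\<lambda>\<omega>. real (fst (X [] \<omega>))) = 1 / \<rho>"
  defines "\<mu>\<theta> \<equiv> \<lambda>n \<theta>. prob_space.expectation M (\<lambda>\<omega>. len (proj \<theta> ` GW_S \<rho> J0 X n \<omega>))"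
    and "\<mu> \<equiv> \<lambda>n. prob_space.expectation M (\<lambda>\<omega>. Fav (GW_S \<rho> J0 X n \<omega>))"
  shows "(\<forall>\<theta>. \<forall>n\<ge>1. \<mu>\<theta> n \<theta> - \<mu>\<theta> (n + 1) \<theta> \<le> \<mu>\<theta> (n - 1) \<theta> - \<mu>\<theta> n \<theta>)
       \<and> (\<forall>n\<ge>1. \<mu> n - \<mu> (n + 1) \<le> \<mu> (n - 1) - \<mu> n)"
proof -
  obtain B where "\<And>p \<omega>. \<omega> \<in> space M \<Longrightarrow> fst (X p \<omega>) \<le> B"
    using assms(10) by blast
  then interpret GW_model M \<rho> J0 B X
    using assms(1,2,5,7-9,11,12) by (simp add: GW_model_def GW_model_axioms_def)
  have \<mu>\<theta>_eq: "\<mu>\<theta> n \<theta> = expectation (\<lambda>\<omega>. width \<theta> n (tree \<omega>))" for n \<theta>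
    unfolding \<mu>\<theta>_def GW_S_eq_GW_level_tree ..
  have \<mu>_eq: "\<mu> n = (LINT \<theta>:{0..pi}|lborel. \<mu>\<theta> n \<theta>)" for n
    unfolding \<mu>_def \<mu>\<theta>_eq GW_S_eq_GW_level_tree by (rule expectation_Fav_GW_level(1))
  have convex_\<theta>: "\<mu>\<theta> n \<theta> - \<mu>\<theta> (n + 1) \<theta> \<le> \<mu>\<theta> (n - 1) \<theta> - \<mu>\<theta> n \<theta>" if "n \<ge> 1" for n \<theta>
  proof -
    obtain m where "n = Suc m" using \<open>n \<ge> 1\<close> by (cases n) auto
    then show ?thesis
      unfolding \<mu>\<theta>_eq using expected_width_decrement_le[of \<theta> m] by simp
  qed
  have "\<mu> n - \<mu> (n + 1) \<le> \<mu> (n - 1) - \<mu> n" if "n \<ge> 1" for n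
    unfolding \<mu>_eq using convex_\<theta>[OF that]
    by (intro set_integral_diff_le) (auto simp: \<mu>\<theta>_eq expectation_Fav_GW_level(2))
  with convex_\<theta> show ?thesis
    by blast
qed

end
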